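(* Let $P,Q$ be combinatorially equivalent convex polytopes and let $\phi:\mathrm{Faces}(P)\to\mathrm{Faces}(Q)$ be an inclusion-preserving bijection of face lattices. Let $v^{(1)},\dots,v^{(n)}$ be the vertices of $P$, and let $\sigma:P\to\Delta_{n-1}$ be a continuous map with $p=\sum_{k=1}^n\sigma(p)_kv^{(k)}$ for all $p\in P$. Define $R:P\to Q$ by $R(p)=\sum_{k=1}^n\sigma(p)_k\,\phi(v^{(k)})$, where $\phi(v^{(k)})$ denotes the vertex of $Q$ that is the image of the $0$-face $\{v^{(k)}\}$. Then $R$ maps each face $f\subset P$ surjectively onto $\phi(f)$; in particular $R$ is surjective.
   Context: $\Delta_{n-1}=\{t\in\mathbb R^n:t_k\ge0,\sum_kt_k=1\}$ is the standard simplex. Two convex polytopes are combinatorially equivalent if their face lattices (faces ordered by inclusion) are isomorphic. A continuous $\sigma$ as in the statement is a system of generalized barycentric coordinates; it exists for every convex polytope. *)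

theory Defs
  imports "HOL-Analysis.Analysis"
begin

end

theory Submission
  imports Defs
begin

text \<open>
  A point of a face \<open>F\<close> of \<open>P\<close> has positive barycentric weight only on
  vertices lying in \<open>F\<close>, and these are sent to vertices of \<open>\<phi> F\<close>; hence \<open>R\<close>
  maps \<open>F\<close> into the convex set \<open>\<phi> F\<close>.

  For the converse, Dugundji's extension theorem, applied face by face, gives a
  continuous \<open>s : Q \<rightarrow> P\<close> with \<open>s G \<subseteq> \<psi> G\<close> for every face \<open>G\<close>, where \<open>\<psi>\<close>
  inverts \<open>\<phi>\<close>. If \<open>R\<close> missed a point \<open>q\<close> of the relative interior of \<open>\<phi> F\<close>,
  retracting \<open>R\<close> away from \<open>q\<close> onto the relative boundary of \<open>\<phi> F\<close> and then
  applying \<open>s\<close> would give a continuous map from \<open>F\<close> to its relative boundary that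
  maps every proper face into itself. No such map exists: reflect it through a
  relative interior point \<open>c\<close> and project radially back onto the relative boundary;
  a fixed point of the result, which exists by Brouwer's theorem, puts \<open>c\<close> on a
  proper face. As every point of \<open>\<phi> F\<close> lies in the relative interior of one of
  its faces, \<open>R F = \<phi> F\<close>.
\<close>

lemma ex1_ray_to_rel_frontier:
  fixes S :: "'a::euclidean_space set"
  assumes "convex S" "bounded S" and a: "a \<in> rel_interior S"
    and "a + l \<in> affine hull S" "l \<noteq> 0"
  shows "\<exists>!t. 0 < t \<and> a + t *\<^sub>R l \<in> rel_frontier S"
proof -
  have False if "0 < s" "s < t" "a + s *\<^sub>R l \<in> rel_frontier S" "a + t *\<^sub>R l \<in> rel_frontier S"
    for s t
  proof -
    have "a + s *\<^sub>R l \<in> open_segment a (a + t *\<^sub>R l)"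
      using that(1,2) \<open>l \<noteq> 0\<close> by (auto simp: in_segment algebra_simps intro!: exI[of _ "s / t"])
    also have "\<dots> \<subseteq> rel_interior S"
      using rel_interior_closure_convex_segment[OF \<open>convex S\<close> a] that(4)
      by (auto simp: rel_frontier_def)
    finally show False
      using that(3) by (auto simp: rel_frontier_def)
  qed
  moreover obtain s where "0 < s" "a + s *\<^sub>R l \<in> rel_frontier S"
    using ray_to_rel_frontier[OF \<open>bounded S\<close> a \<open>a + l \<in> affine hull S\<close> \<open>l \<noteq> 0\<close>] by blast
  ultimately show ?thesis
    by (metis linorder_neqE_linordered_idom)
qed

lemma radial_projection_rel_frontier:
  fixes S :: "'a::euclidean_space set"
  assumes "convex S" "bounded S" and a: "a \<in> rel_interior S"
  obtains d where "continuous_on (affine hull S - {a}) (\<lambda>x. a + d x *\<^sub>R (x - a))"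
    and "\<And>x. x \<in> affine hull S - {a} \<Longrightarrow> 0 < d x \<and> a + d x *\<^sub>R (x - a) \<in> rel_frontier S"
proof -
  define V where "V = (\<lambda>x. x - a) ` (affine hull S)"
  define e where "e l = (THE t. 0 < t \<and> a + t *\<^sub>R l \<in> rel_frontier S)" for l
  have aff_a: "a \<in> affine hull S"
    by (meson a subsetD hull_inc rel_interior_subset)
  have e: "0 < t \<and> a + t *\<^sub>R l \<in> rel_frontier S \<longleftrightarrow> e l = t" if "l \<in> V - {0}" for l t
  proof -
    have "a + l \<in> affine hull S" "l \<noteq> 0"
      using that by (auto simp: V_def)
    then have ex1: "\<exists>!t. 0 < t \<and> a + t *\<^sub>R l \<in> rel_frontier S"
      by (rule ex1_ray_to_rel_frontier[OF assms])
    then have "0 < e l \<and> a + e l *\<^sub>R l \<in> rel_frontier S"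
      unfolding e_def by (rule theI')
    with ex1 show ?thesis
      by blast
  qed
  have "continuous_on (V - {0}) (\<lambda>l. e l *\<^sub>R l)"
  proof (rule continuous_on_compact_surface_projection)
    show "compact ((\<lambda>x. x - a) ` rel_frontier S)"
      using compact_rel_frontier_bounded[OF \<open>bounded S\<close>]
      by (rule compact_continuous_image[rotated]) (intro continuous_intros)
    have "rel_frontier S \<subseteq> affine hull S - {a}"
      using rel_frontier_affine_hull a by (auto simp: rel_frontier_def)
    then show "(\<lambda>x. x - a) ` rel_frontier S \<subseteq> V - {0}"
      by (auto simp: V_def)
    show "cone V"
      unfolding V_def
      by (rule subspace_imp_cone[OF affine_diffs_subspace_subtract[OF affine_affine_hull aff_a]])
    show "0 < t \<and> t *\<^sub>R l \<in> (\<lambda>x. x - a) ` rel_frontier S \<longleftrightarrow> e l = t"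
      if "l \<in> V - {0}" for l t
    proof -
      have "t *\<^sub>R l \<in> (\<lambda>x. x - a) ` rel_frontier S \<longleftrightarrow> a + t *\<^sub>R l \<in> rel_frontier S"
        by (auto simp: image_iff eq_diff_eq add.commute)
      then show ?thesis
        using e[OF that] by blast
    qed
  qed
  then have "continuous_on (affine hull S - {a}) (\<lambda>x. e (x - a) *\<^sub>R (x - a))"
    by (rule continuous_on_compose2) (auto intro!: continuous_intros simp: V_def)
  then have "continuous_on (affine hull S - {a}) (\<lambda>x. a + e (x - a) *\<^sub>R (x - a))"
    by (rule continuous_on_add[OF continuous_on_const])
  moreover have "0 < e (x - a) \<and> a + e (x - a) *\<^sub>R (x - a) \<in> rel_frontier S"
    if "x \<in> affine hull S - {a}" for x
  proof -
    have "x - a \<in> V - {0}"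
      using that by (auto simp: V_def)
    then show ?thesis
      using e[of "x - a" "e (x - a)"] by blast
  qed
  ultimately show thesis
    by (rule that)
qed

lemma convex_mem_between_ray:
  assumes "convex H" "x \<in> H" "z \<in> H" "0 < t" "x = c + t *\<^sub>R (c - z)"
  shows "c \<in> H"
proof -
  have "x + t *\<^sub>R z = (1 + t) *\<^sub>R c"
    using assms(5) by (simp add: algebra_simps)
  have "(1 / (1 + t)) *\<^sub>R x + (t / (1 + t)) *\<^sub>R z \<in> H"
    using assms(1-4) by (intro convexD) (auto simp: add_divide_distrib[symmetric])
  also have "(1 / (1 + t)) *\<^sub>R x + (t / (1 + t)) *\<^sub>R z = (1 / (1 + t)) *\<^sub>R (x + t *\<^sub>R z)"
    by (simp add: scaleR_add_right)
  also have "\<dots> = c"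
    using \<open>x + t *\<^sub>R z = (1 + t) *\<^sub>R c\<close> \<open>0 < t\<close> by simp
  finally show ?thesis .
qed

lemma no_face_preserving_map_to_rel_frontier:
  fixes F :: "'a::euclidean_space set"
  assumes "polytope F" "F \<noteq> {}" and contf: "continuous_on F f"
    and f_rel_frontier: "f ` F \<subseteq> rel_frontier F"
    and f_face: "\<And>H x. H face_of F \<Longrightarrow> H \<noteq> F \<Longrightarrow> x \<in> H \<Longrightarrow> f x \<in> H"
  shows False
proof -
  have "convex F" "compact F"
    using \<open>polytope F\<close> polytope_imp_convex polytope_imp_compact by auto
  obtain c where c: "c \<in> rel_interior F"
    using \<open>F \<noteq> {}\<close> \<open>convex F\<close> rel_interior_eq_empty by blast
  obtain d where contd: "continuous_on (affine hull F - {c}) (\<lambda>y. c + d y *\<^sub>R (y - c))"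
    and d: "\<And>y. y \<in> affine hull F - {c} \<Longrightarrow> 0 < d y \<and> c + d y *\<^sub>R (y - c) \<in> rel_frontier F"
    using radial_projection_rel_frontier[OF \<open>convex F\<close> compact_imp_bounded[OF \<open>compact F\<close>] c]
    by metis
  have rel_frontier_F: "rel_frontier F \<subseteq> F - {c}"
    using c closure_closed[OF compact_imp_closed[OF \<open>compact F\<close>]] by (auto simp: rel_frontier_def)
  define y where "y x = 2 *\<^sub>R c - f x" for x
  have y: "y x \<in> affine hull F - {c}" if "x \<in> F" for x
  proof -
    have fx: "f x \<in> F - {c}"
      using that f_rel_frontier rel_frontier_F by blast
    have "c \<in> affine hull F" "f x \<in> affine hull F"
      using c fx rel_interior_subset by (auto intro: hull_inc)
    then have "2 *\<^sub>R c + (-1) *\<^sub>R f x \<in> affine hull F"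
      by (rule mem_affine[OF affine_affine_hull]) simp
    moreover have "y x \<noteq> c"
      using fx by (auto simp: y_def scaleR_2 algebra_simps)
    ultimately show ?thesis
      by (simp add: y_def)
  qed
  define g where "g x = c + d (y x) *\<^sub>R (y x - c)" for x
  have "continuous_on F y"
    unfolding y_def by (intro continuous_intros contf)
  then have "continuous_on F g"
    unfolding g_def by (rule continuous_on_compose2[OF contd]) (use y in blast)
  moreover have g: "g x \<in> rel_frontier F" if "x \<in> F" for x
    using d[OF y[OF that]] by (simp add: g_def)
  moreover have "g \<in> F \<rightarrow> F"
    using g rel_frontier_F by (auto simp: Pi_iff)
  ultimately obtain x where x: "x \<in> F" "g x = x"
    using brouwer[OF \<open>compact F\<close> \<open>convex F\<close> \<open>F \<noteq> {}\<close>] by blast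
  then have "x \<in> rel_frontier F"
    using g by metis
  then obtain H where H: "H face_of F" "H \<noteq> F" "x \<in> H"
    unfolding rel_frontier_of_polyhedron_alt[OF polytope_imp_polyhedron[OF \<open>polytope F\<close>]] by blast
  have "0 < d (y x)"
    using d[OF y[OF x(1)]] by blast
  moreover have "x = c + d (y x) *\<^sub>R (c - f x)"
    using x(2) by (simp add: g_def y_def scaleR_2)
  ultimately have "c \<in> H"
    using convex_mem_between_ray[OF face_of_imp_convex[OF H(1)] H(3) f_face[OF H]] by blast
  then show False
    using face_of_disjoint_rel_interior[OF H(1,2)] c by blast
qed

lemma sum_restrict_positive_weights:
  fixes x :: "'i \<Rightarrow> 'a::real_vector"
  assumes "finite I" "\<And>i. i \<in> I \<Longrightarrow> 0 \<le> u i"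
  shows "sum u {i \<in> I. 0 < u i} = sum u I"
    and "(\<Sum>i\<in>{i \<in> I. 0 < u i}. u i *\<^sub>R x i) = (\<Sum>i\<in>I. u i *\<^sub>R x i)"
proof -
  have zero: "u i = 0" if "i \<in> I - {i \<in> I. 0 < u i}" for i
    using assms(2)[of i] that by simp
  have sub: "{i \<in> I. 0 < u i} \<subseteq> I"
    by blast
  show "sum u {i \<in> I. 0 < u i} = sum u I"
    by (rule sum.mono_neutral_left[OF \<open>finite I\<close> sub]) (use zero in blast)
  show "(\<Sum>i\<in>{i \<in> I. 0 < u i}. u i *\<^sub>R x i) = (\<Sum>i\<in>I. u i *\<^sub>R x i)"
    by (rule sum.mono_neutral_left[OF \<open>finite I\<close> sub]) (use zero in auto)
qed

lemma convex_combination_in_face: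
  fixes x :: "'i \<Rightarrow> 'a::euclidean_space"
  assumes "F face_of S" "convex S" "finite I"
    and u: "\<And>i. i \<in> I \<Longrightarrow> 0 \<le> u i" "sum u I = 1"
    and x: "\<And>i. i \<in> I \<Longrightarrow> x i \<in> S"
    and in_F: "(\<Sum>i\<in>I. u i *\<^sub>R x i) \<in> F"
    and "j \<in> I" "0 < u j"
  shows "x j \<in> F"
proof -
  define J where "J = {i \<in> I. 0 < u i}"
  have "finite J" "j \<in> J"
    using \<open>finite I\<close> \<open>j \<in> I\<close> \<open>0 < u j\<close> by (auto simp: J_def)
  have "\<forall>i\<in>J. convex {x i} \<and> {x i} \<noteq> {}"
    by simp
  note rel_interior_hull = rel_interior_convex_hull_union[OF \<open>finite J\<close> this]
  have "\<And>i. i \<in> J \<Longrightarrow> 0 < u i" "sum u J = 1"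
    using sum_restrict_positive_weights(1)[where u = u, OF \<open>finite I\<close> u(1)] u(2)
    by (simp_all add: J_def)
  then have "(\<Sum>i\<in>J. u i *\<^sub>R x i) \<in> rel_interior (convex hull (\<Union>i\<in>J. {x i}))"
    unfolding rel_interior_hull by (intro CollectI exI[of _ u] exI[of _ x]) simp
  then have "(\<Sum>i\<in>I. u i *\<^sub>R x i) \<in> rel_interior (convex hull (\<Union>i\<in>J. {x i}))"
    using sum_restrict_positive_weights(2)[where u = u and x = x, OF \<open>finite I\<close> u(1)]
    by (simp add: J_def)
  moreover have "convex hull (\<Union>i\<in>J. {x i}) \<subseteq> S"
    using x \<open>convex S\<close> by (intro hull_minimal) (auto simp: J_def)
  ultimately have "convex hull (\<Union>i\<in>J. {x i}) \<subseteq> F"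
    using subset_of_face_of[OF \<open>F face_of S\<close>] in_F by blast
  moreover have "x j \<in> convex hull (\<Union>i\<in>J. {x i})"
    using \<open>j \<in> J\<close> by (auto intro: hull_inc)
  ultimately show ?thesis
    by blast
qed

lemma continuous_extension_into_convex:
  fixes s :: "'a::{metric_space,second_countable_topology} \<Rightarrow> 'b::real_inner"
  assumes "closed U" "closed H" and conts: "continuous_on U s"
    and "convex C" "C \<noteq> {}" and s_C: "s ` (H \<inter> U) \<subseteq> C"
  obtains s' where "continuous_on (U \<union> H) s'" "\<And>x. x \<in> U \<Longrightarrow> s' x = s x" "s' ` H \<subseteq> C"
proof -
  obtain g where g: "continuous_on H g" "g ` H \<subseteq> C" and g_s: "\<And>x. x \<in> H \<inter> U \<Longrightarrow> g x = s x"
    using Dugundji[OF \<open>convex C\<close> \<open>C \<noteq> {}\<close> closedin_closed_Int[OF \<open>closed U\<close>]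
        continuous_on_subset[OF conts Int_lower2] s_C]
    by metis
  define s' where "s' x = (if x \<in> U then s x else g x)" for x
  show thesis
  proof (rule that[of s'])
    have "continuous_on U s'"
      using conts by (rule continuous_on_eq) (simp add: s'_def)
    moreover have "continuous_on H s'"
      using g(1) by (rule continuous_on_eq) (simp add: s'_def g_s)
    ultimately show "continuous_on (U \<union> H) s'"
      by (rule continuous_on_closed_Un[OF \<open>closed U\<close> \<open>closed H\<close>])
    show "s' ` H \<subseteq> C"
      using g(2) g_s[symmetric] by (auto simp: s'_def)
  qed (simp add: s'_def)
qed

lemma continuous_selection_insert:
  fixes \<G> :: "'a::{metric_space,second_countable_topology} set set"
    and \<Psi> :: "'a set \<Rightarrow> 'b::real_inner set"
  assumes "finite \<G>" and closed: "\<And>K. K \<in> insert H \<G> \<Longrightarrow> closed K"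
    and "convex (\<Psi> H)" and nonempty: "H \<noteq> {} \<Longrightarrow> \<Psi> H \<noteq> {}"
    and Int: "\<And>K. K \<in> \<G> \<Longrightarrow> K \<inter> H \<in> \<G>"
    and mono: "\<And>K. K \<in> \<G> \<Longrightarrow> \<Psi> (K \<inter> H) \<subseteq> \<Psi> H"
    and conts: "continuous_on (\<Union>\<G>) s" and s: "\<And>K. K \<in> \<G> \<Longrightarrow> s ` K \<subseteq> \<Psi> K"
  shows "\<exists>s'. continuous_on (\<Union>(insert H \<G>)) s' \<and> (\<forall>K\<in>insert H \<G>. s' ` K \<subseteq> \<Psi> K)"
proof (cases "H = {}")
  case True
  then show ?thesis
    using conts s by (intro exI[of _ s]) auto
next
  case False
  have "s ` (H \<inter> \<Union>\<G>) \<subseteq> \<Psi> H"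
  proof clarify
    fix x K
    assume "x \<in> H" "K \<in> \<G>" "x \<in> K"
    then have "s x \<in> \<Psi> (K \<inter> H)"
      using s[OF Int] by blast
    then show "s x \<in> \<Psi> H"
      using mono \<open>K \<in> \<G>\<close> by blast
  qed
  moreover have "closed (\<Union>\<G>)"
    using closed \<open>finite \<G>\<close> by (intro closed_Union) auto
  ultimately obtain s' where s': "continuous_on (\<Union>\<G> \<union> H) s'"
    "\<And>x. x \<in> \<Union>\<G> \<Longrightarrow> s' x = s x" "s' ` H \<subseteq> \<Psi> H"
    using continuous_extension_into_convex[OF _ closed[of H] conts \<open>convex (\<Psi> H)\<close> nonempty[OF False]]
    by (metis insertI1)
  have "s' ` K \<subseteq> \<Psi> K" if "K \<in> \<G>" for K
    using s[OF that] s'(2) that by auto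
  then show ?thesis
    using s' by (intro exI[of _ s']) (auto simp: Un_commute)
qed

lemma continuous_selection_Int_closed_family:
  fixes \<A> :: "'a::{metric_space,second_countable_topology} set set"
    and \<Psi> :: "'a set \<Rightarrow> 'b::real_inner set"
  assumes "finite \<A>" and closed: "\<And>H. H \<in> \<A> \<Longrightarrow> closed H"
    and Int: "\<And>H K. H \<in> \<A> \<Longrightarrow> K \<in> \<A> \<Longrightarrow> H \<inter> K \<in> \<A>"
    and convex: "\<And>H. H \<in> \<A> \<Longrightarrow> convex (\<Psi> H)"
    and nonempty: "\<And>H. H \<in> \<A> \<Longrightarrow> H \<noteq> {} \<Longrightarrow> \<Psi> H \<noteq> {}"
    and mono: "\<And>H K. H \<in> \<A> \<Longrightarrow> K \<in> \<A> \<Longrightarrow> H \<subseteq> K \<Longrightarrow> \<Psi> H \<subseteq> \<Psi> K"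
  obtains s where "continuous_on (\<Union>\<A>) s" "\<And>H. H \<in> \<A> \<Longrightarrow> s ` H \<subseteq> \<Psi> H"
proof -
  have "\<exists>s. continuous_on (\<Union>\<F>) s \<and> (\<forall>H\<in>\<F>. s ` H \<subseteq> \<Psi> H)"
    if "\<F> \<subseteq> \<A>" "\<And>H K. H \<in> \<F> \<Longrightarrow> K \<in> \<F> \<Longrightarrow> H \<inter> K \<in> \<F>" for \<F>
    using finite_subset[OF that(1) \<open>finite \<A>\<close>] that
  proof (induction \<F> rule: finite_psubset_induct)
    case (psubset \<F>)
    show ?case
    proof (cases "\<F> = {}")
      case False
      then obtain H where H: "H \<in> \<F>" and H_max: "\<And>K. K \<in> \<F> \<Longrightarrow> H \<subseteq> K \<Longrightarrow> K = H"
        using finite_has_maximal[OF \<open>finite \<F>\<close>] by metis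
      define \<G> where "\<G> = \<F> - {H}"
      have "\<G> \<subset> \<F>" "\<G> \<subseteq> \<A>" "insert H \<G> = \<F>"
        using H psubset.prems(1) by (auto simp: \<G>_def)
      have Int_\<G>: "K \<inter> L \<in> \<G>" if "K \<in> \<G>" "L \<in> \<F>" for K L
      proof -
        have "K \<inter> L \<noteq> H"
          using that H_max[of K] by (auto simp: \<G>_def)
        then show ?thesis
          using that psubset.prems(2)[of K L] by (simp add: \<G>_def)
      qed
      then have "\<And>K L. K \<in> \<G> \<Longrightarrow> L \<in> \<G> \<Longrightarrow> K \<inter> L \<in> \<G>"
        using \<open>\<G> \<subset> \<F>\<close> by blast
      then obtain s where s: "continuous_on (\<Union>\<G>) s" "\<And>K. K \<in> \<G> \<Longrightarrow> s ` K \<subseteq> \<Psi> K"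
        using psubset.IH[OF \<open>\<G> \<subset> \<F>\<close> \<open>\<G> \<subseteq> \<A>\<close>] by blast
      have "H \<in> \<A>" "finite \<G>"
        using H psubset.prems(1) \<open>finite \<F>\<close> by (auto simp: \<G>_def)
      have "\<Psi> (K \<inter> H) \<subseteq> \<Psi> H" if "K \<in> \<G>" for K
        using mono Int_\<G>[OF that H] \<open>\<G> \<subseteq> \<A>\<close> \<open>H \<in> \<A>\<close> by blast
      moreover have "closed K" if "K \<in> insert H \<G>" for K
        using closed that \<open>\<G> \<subseteq> \<A>\<close> \<open>H \<in> \<A>\<close> by blast
      ultimately show ?thesis
        using continuous_selection_insert[OF \<open>finite \<G>\<close> _ convex[OF \<open>H \<in> \<A>\<close>]
            nonempty[OF \<open>H \<in> \<A>\<close>] Int_\<G>[OF _ H] _ s] \<open>insert H \<G> = \<F>\<close>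
        by blast
    qed simp
  qed
  from this[OF order_refl Int] show thesis
    by (metis that)
qed

lemma retract_avoiding_rel_interior_point:
  fixes T :: "'b::euclidean_space set"
  assumes "convex T" "bounded T" "q \<in> rel_interior T"
    and contg: "continuous_on X g" and g: "g ` X \<subseteq> T - {q}"
  obtains g' where "continuous_on X g'" "g' ` X \<subseteq> rel_frontier T"
    "\<And>x. x \<in> X \<Longrightarrow> g x \<in> rel_frontier T \<Longrightarrow> g' x = g x"
proof -
  obtain r where r: "retraction (affine hull T - {q}) (rel_frontier T) r"
    using rel_frontier_retract_of_punctured_affine_hull[OF assms(2,1,3)]
    unfolding retract_of_def by blast
  then have r_cont: "continuous_on (affine hull T - {q}) r"
    and r_img: "r ` (affine hull T - {q}) \<subseteq> rel_frontier T"
    and r_id: "\<And>y. y \<in> rel_frontier T \<Longrightarrow> r y = y"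
    by (auto simp: retraction_def)
  have g_hull: "g ` X \<subseteq> affine hull T - {q}"
    using g by (auto intro: hull_inc)
  show thesis
  proof (rule that[of "\<lambda>x. r (g x)"])
    show "continuous_on X (\<lambda>x. r (g x))"
      by (rule continuous_on_compose2[OF r_cont contg g_hull])
    show "(\<lambda>x. r (g x)) ` X \<subseteq> rel_frontier T"
      using r_img g_hull by blast
    show "r (g x) = g x" if "g x \<in> rel_frontier T" for x
      using r_id[OF that] .
  qed
qed

lemma polytope_mem_rel_interior_face:
  fixes S :: "'a::euclidean_space set"
  assumes "polytope S" "x \<in> S"
  shows "\<exists>F. F face_of S \<and> x \<in> rel_interior F"
  using assms
proof (induction "nat (aff_dim S + 1)" arbitrary: S rule: less_induct)
  case less
  have "convex S" "closed S"
    using less.prems(1) polytope_imp_convex polytope_imp_closed by auto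
  show ?case
  proof (cases "x \<in> rel_interior S")
    case True
    then show ?thesis
      using face_of_refl[OF \<open>convex S\<close>] by blast
  next
    case False
    then have "x \<in> rel_frontier S"
      using less.prems(2) closure_closed[OF \<open>closed S\<close>] by (simp add: rel_frontier_def)
    then obtain G where G: "G face_of S" "G \<noteq> S" "x \<in> G"
      unfolding rel_frontier_of_polyhedron_alt[OF polytope_imp_polyhedron[OF less.prems(1)]] by blast
    have "aff_dim G < aff_dim S"
      using face_of_aff_dim_lt[OF \<open>convex S\<close> G(1,2)] .
    then have "nat (aff_dim G + 1) < nat (aff_dim S + 1)"
      using aff_dim_geq[of G] by linarith
    then obtain F where "F face_of G" "x \<in> rel_interior F"
      using less.hyps face_of_polytope_polytope[OF less.prems(1) G(1)] G(3) by blast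
    then show ?thesis
      using face_of_trans[OF _ G(1)] by blast
  qed
qed

locale face_lattice_iso =
  fixes P :: "'a::euclidean_space set" and Q :: "'b::euclidean_space set"
    and \<phi> :: "'a set \<Rightarrow> 'b set"
  assumes polytope_P: "polytope P" and polytope_Q: "polytope Q"
    and bij: "bij_betw \<phi> {F. F face_of P} {G. G face_of Q}"
    and \<phi>_subset_iff: "\<And>F F'. F face_of P \<Longrightarrow> F' face_of P \<Longrightarrow> F \<subseteq> F' \<longleftrightarrow> \<phi> F \<subseteq> \<phi> F'"
begin

definition \<psi> :: "'b set \<Rightarrow> 'a set"
  where "\<psi> = inv_into {F. F face_of P} \<phi>"

lemma face_of_\<phi>: "F face_of P \<Longrightarrow> \<phi> F face_of Q"
  using bij by (auto dest: bij_betwE)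

lemma face_of_\<psi>: "G face_of Q \<Longrightarrow> \<psi> G face_of P"
  using bij_betw_inv_into[OF bij] by (auto simp: \<psi>_def dest: bij_betwE)

lemma \<phi>_\<psi>: "G face_of Q \<Longrightarrow> \<phi> (\<psi> G) = G"
  using bij by (simp add: \<psi>_def bij_betw_inv_into_right)

lemma \<psi>_\<phi>: "F face_of P \<Longrightarrow> \<psi> (\<phi> F) = F"
  using bij by (simp add: \<psi>_def bij_betw_inv_into_left)

lemma \<psi>_subset_iff: "G face_of Q \<Longrightarrow> G' face_of Q \<Longrightarrow> \<psi> G \<subseteq> \<psi> G' \<longleftrightarrow> G \<subseteq> G'"
  using \<phi>_subset_iff[OF face_of_\<psi> face_of_\<psi>] by (simp add: \<phi>_\<psi>)

lemma \<phi>_empty: "\<phi> {} = {}"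
proof -
  have "\<phi> {} \<subseteq> \<phi> (\<psi> {})"
    using \<phi>_subset_iff[OF empty_face_of face_of_\<psi>[OF empty_face_of]] by simp
  then show ?thesis
    by (simp add: \<phi>_\<psi>)
qed

lemma \<phi>_eq_empty_iff: "F face_of P \<Longrightarrow> \<phi> F = {} \<longleftrightarrow> F = {}"
  by (metis \<phi>_empty \<psi>_\<phi> empty_face_of)

lemma \<phi>_top: "\<phi> P = Q"
proof -
  have "P face_of P" "Q face_of Q"
    using polytope_P polytope_Q by (simp_all add: face_of_refl polytope_imp_convex)
  then have "\<phi> (\<psi> Q) \<subseteq> \<phi> P"
    using \<phi>_subset_iff[OF face_of_\<psi>] face_of_imp_subset[OF face_of_\<psi>] by blast
  then show ?thesis
    using face_of_imp_subset[OF face_of_\<phi>[OF \<open>P face_of P\<close>]] \<phi>_\<psi>[OF \<open>Q face_of Q\<close>] by blast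
qed

lemma \<phi>_vertex:
  assumes "v extreme_point_of P"
  obtains w where "\<phi> {v} = {w}"
proof -
  have v: "{v} face_of P"
    using assms by (simp add: face_of_singleton)
  then have "\<phi> {v} face_of Q" "\<phi> {v} \<noteq> {}"
    using face_of_\<phi> \<phi>_eq_empty_iff by auto
  then obtain w where w: "w extreme_point_of \<phi> {v}"
    using extreme_point_exists_convex face_of_imp_compact face_of_imp_convex
      polytope_imp_compact polytope_imp_convex polytope_Q by metis
  then have "{w} face_of Q"
    using face_of_trans \<open>\<phi> {v} face_of Q\<close> face_of_singleton by blast
  have "\<psi> {w} \<subseteq> \<psi> (\<phi> {v})"
    using \<psi>_subset_iff[OF \<open>{w} face_of Q\<close> \<open>\<phi> {v} face_of Q\<close>] w by (simp add: extreme_point_of_def)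
  moreover have "\<psi> {w} \<noteq> {}"
    using \<phi>_\<psi>[OF \<open>{w} face_of Q\<close>] \<phi>_empty by force
  ultimately have "\<psi> {w} = {v}"
    using \<psi>_\<phi>[OF v] by (auto simp: subset_singleton_iff)
  then have "\<phi> {v} = {w}"
    using \<phi>_\<psi>[OF \<open>{w} face_of Q\<close>] by simp
  then show thesis
    by (rule that)
qed

lemma proper_face_of_\<phi>:
  assumes "F face_of P" "H face_of F" "H \<noteq> F"
  shows "\<phi> H face_of \<phi> F" "\<phi> H \<noteq> \<phi> F"
proof -
  have "H face_of P"
    using assms face_of_trans by blast
  then have "\<phi> H \<subseteq> \<phi> F"
    using \<phi>_subset_iff[OF _ \<open>F face_of P\<close>] face_of_imp_subset[OF \<open>H face_of F\<close>] by blast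
  then show "\<phi> H face_of \<phi> F"
    using face_of_subset face_of_\<phi> face_of_imp_subset \<open>H face_of P\<close> \<open>F face_of P\<close> by metis
  show "\<phi> H \<noteq> \<phi> F"
    using \<psi>_\<phi> \<open>H face_of P\<close> \<open>F face_of P\<close> \<open>H \<noteq> F\<close> by metis
qed

lemma proper_face_of_\<psi>:
  assumes "F face_of P" "G face_of \<phi> F" "G \<noteq> \<phi> F"
  shows "\<psi> G face_of F" "\<psi> G \<noteq> F"
proof -
  have "G face_of Q"
    using assms face_of_trans face_of_\<phi> by blast
  then have "\<psi> G \<subseteq> F"
    using \<psi>_subset_iff[OF _ face_of_\<phi>[OF \<open>F face_of P\<close>]] \<psi>_\<phi>[OF \<open>F face_of P\<close>]
      face_of_imp_subset[OF \<open>G face_of \<phi> F\<close>] by metis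
  then show "\<psi> G face_of F"
    using face_of_subset face_of_\<psi>[OF \<open>G face_of Q\<close>] face_of_imp_subset[OF \<open>F face_of P\<close>] by blast
  show "\<psi> G \<noteq> F"
    using \<phi>_\<psi>[OF \<open>G face_of Q\<close>] \<open>G \<noteq> \<phi> F\<close> by blast
qed

lemma continuous_inverse_selection:
  obtains s where "continuous_on Q s" "\<And>G. G face_of Q \<Longrightarrow> s ` G \<subseteq> \<psi> G"
proof (rule continuous_selection_Int_closed_family[of "{G. G face_of Q}" \<psi>])
  show "finite {G. G face_of Q}"
    by (rule finite_polytope_faces[OF polytope_Q])
  show "closed G" if "G \<in> {G. G face_of Q}" for G
    using that face_of_imp_closed polytope_Q polytope_imp_convex polytope_imp_closed by blast
  show "H \<inter> K \<in> {G. G face_of Q}" if "H \<in> {G. G face_of Q}" "K \<in> {G. G face_of Q}" for H K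
    using that face_of_Int by blast
  show "convex (\<psi> G)" if "G \<in> {G. G face_of Q}" for G
    using that face_of_\<psi> face_of_imp_convex by blast
  show "\<psi> G \<noteq> {}" if "G \<in> {G. G face_of Q}" "G \<noteq> {}" for G
    using that \<phi>_\<psi> \<phi>_empty by force
  show "\<psi> G \<subseteq> \<psi> K" if "G \<in> {G. G face_of Q}" "K \<in> {G. G face_of Q}" "G \<subseteq> K" for G K
    using that \<psi>_subset_iff by blast
next
  fix s
  assume s: "continuous_on (\<Union>{G. G face_of Q}) s"
    "\<And>G. G \<in> {G. G face_of Q} \<Longrightarrow> s ` G \<subseteq> \<psi> G"
  have "\<Union>{G. G face_of Q} = Q"
    using face_of_refl[OF polytope_imp_convex[OF polytope_Q]] face_of_imp_subset by blast
  show thesis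
  proof (rule that)
    show "continuous_on Q s"
      using s(1) \<open>\<Union>{G. G face_of Q} = Q\<close> by simp
    show "s ` G \<subseteq> \<psi> G" if "G face_of Q" for G
      using s(2) that by blast
  qed
qed

lemma selection_rel_frontier:
  assumes s: "\<And>G. G face_of Q \<Longrightarrow> s ` G \<subseteq> \<psi> G" and F: "F face_of P"
    and y: "y \<in> rel_frontier (\<phi> F)"
  shows "s y \<in> rel_frontier F"
proof -
  have "polytope (\<phi> F)"
    using face_of_polytope_polytope[OF polytope_Q face_of_\<phi>[OF F]] .
  then obtain G where G: "G face_of \<phi> F" "G \<noteq> \<phi> F" "y \<in> G"
    using y
    unfolding rel_frontier_of_polyhedron_alt[OF polytope_imp_polyhedron[OF \<open>polytope (\<phi> F)\<close>]]
    by blast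
  then have "s y \<in> \<psi> G"
    using s[OF face_of_trans[OF G(1) face_of_\<phi>[OF F]]] by blast
  then show ?thesis
    using face_of_subset_rel_frontier proper_face_of_\<psi>[OF F G(1,2)] by blast
qed

lemma rel_interior_subset_image:
  assumes contR: "continuous_on P R" and R_face: "\<And>F. F face_of P \<Longrightarrow> R ` F \<subseteq> \<phi> F"
    and F: "F face_of P"
  shows "rel_interior (\<phi> F) \<subseteq> R ` F"
proof
  fix q
  assume q: "q \<in> rel_interior (\<phi> F)"
  show "q \<in> R ` F"
  proof (rule ccontr)
    assume "q \<notin> R ` F"
    then have "R ` F \<subseteq> \<phi> F - {q}"
      using R_face[OF F] by blast
    have "polytope (\<phi> F)"
      using face_of_polytope_polytope[OF polytope_Q face_of_\<phi>[OF F]] .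
    then have "convex (\<phi> F)" "bounded (\<phi> F)"
      by (simp_all add: polytope_imp_convex polytope_imp_bounded)
    then obtain r where r: "continuous_on F r" "r ` F \<subseteq> rel_frontier (\<phi> F)"
      and r_R: "\<And>x. x \<in> F \<Longrightarrow> R x \<in> rel_frontier (\<phi> F) \<Longrightarrow> r x = R x"
      using retract_avoiding_rel_interior_point[OF _ _ q
          continuous_on_subset[OF contR face_of_imp_subset[OF F]] \<open>R ` F \<subseteq> \<phi> F - {q}\<close>]
      by metis
    obtain s where s: "continuous_on Q s" "\<And>G. G face_of Q \<Longrightarrow> s ` G \<subseteq> \<psi> G"
      using continuous_inverse_selection by blast
    have "rel_frontier (\<phi> F) \<subseteq> Q"
      using closure_closed[OF polytope_imp_closed[OF \<open>polytope (\<phi> F)\<close>]]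
        face_of_imp_subset[OF face_of_\<phi>[OF F]]
      by (auto simp: rel_frontier_def)
    define h where "h x = s (r x)" for x
    have "continuous_on F h"
      unfolding h_def using r \<open>rel_frontier (\<phi> F) \<subseteq> Q\<close>
      by (intro continuous_on_compose2[OF s(1)]) auto
    moreover have "h ` F \<subseteq> rel_frontier F"
      using r(2) selection_rel_frontier[OF s(2) F] by (auto simp: h_def)
    moreover have "h x \<in> H" if H: "H face_of F" "H \<noteq> F" and "x \<in> H" for H x
    proof -
      have HP: "H face_of P"
        using face_of_trans[OF H(1) F] .
      then have "R x \<in> \<phi> H"
        using R_face \<open>x \<in> H\<close> by blast
      moreover have "\<phi> H \<subseteq> rel_frontier (\<phi> F)"
        using face_of_subset_rel_frontier proper_face_of_\<phi>[OF F H] by blast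
      ultimately have "r x = R x"
        using r_R \<open>x \<in> H\<close> face_of_imp_subset[OF H(1)] by blast
      then have "h x = s (R x)"
        by (simp add: h_def)
      also have "\<dots> \<in> \<psi> (\<phi> H)"
        using s(2)[OF face_of_\<phi>[OF HP]] \<open>R x \<in> \<phi> H\<close> by blast
      finally show ?thesis
        using \<psi>_\<phi>[OF HP] by simp
    qed
    moreover have "F \<noteq> {}"
      using q \<phi>_empty rel_interior_subset by blast
    ultimately show False
      using no_face_preserving_map_to_rel_frontier face_of_polytope_polytope[OF polytope_P F] by blast
  qed
qed

lemma image_face_eq:
  assumes "continuous_on P R" and R_face: "\<And>F. F face_of P \<Longrightarrow> R ` F \<subseteq> \<phi> F"
    and F: "F face_of P"
  shows "R ` F = \<phi> F"
proof
  show "\<phi> F \<subseteq> R ` F"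
  proof
    fix q
    assume "q \<in> \<phi> F"
    then obtain G where G: "G face_of \<phi> F" "q \<in> rel_interior G"
      using polytope_mem_rel_interior_face face_of_polytope_polytope[OF polytope_Q face_of_\<phi>[OF F]]
      by blast
    have "G face_of Q"
      using face_of_trans[OF G(1) face_of_\<phi>[OF F]] .
    have "\<psi> G face_of F"
      using proper_face_of_\<psi>[OF F G(1)] face_of_refl face_of_imp_convex[OF F] \<psi>_\<phi>[OF F] by metis
    then have "rel_interior (\<phi> (\<psi> G)) \<subseteq> R ` \<psi> G"
      using rel_interior_subset_image[OF assms(1,2)] face_of_trans F by blast
    then have "q \<in> R ` \<psi> G"
      using G(2) by (simp add: \<phi>_\<psi>[OF \<open>G face_of Q\<close>] subset_eq)
    then show "q \<in> R ` F"
      using face_of_imp_subset[OF \<open>\<psi> G face_of F\<close>] by blast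
  qed
qed (rule R_face[OF F])

lemma convex_combination_of_vertices_in_face:
  assumes F: "F face_of P" and "finite I"
    and v: "\<And>k. k \<in> I \<Longrightarrow> v k extreme_point_of P"
    and w: "\<And>k. k \<in> I \<Longrightarrow> \<phi> {v k} = {w k}"
    and u: "\<And>k. k \<in> I \<Longrightarrow> 0 \<le> u k" "sum u I = 1"
    and in_F: "(\<Sum>k\<in>I. u k *\<^sub>R v k) \<in> F"
  shows "(\<Sum>k\<in>I. u k *\<^sub>R w k) \<in> \<phi> F"
proof -
  define J where "J = {k \<in> I. 0 < u k}"
  have v_P: "v k \<in> P" if "k \<in> I" for k
    using v[OF that] by (simp add: extreme_point_of_def)
  have "w k \<in> \<phi> F" if "k \<in> J" for k
  proof -
    have "k \<in> I" "0 < u k"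
      using that by (auto simp: J_def)
    then have "v k \<in> F"
      using convex_combination_in_face[OF F polytope_imp_convex[OF polytope_P] \<open>finite I\<close> u v_P in_F]
      by blast
    moreover have "{v k} face_of P"
      using v[OF \<open>k \<in> I\<close>] by (simp add: face_of_singleton)
    ultimately have "\<phi> {v k} \<subseteq> \<phi> F"
      using \<phi>_subset_iff[OF _ F] by blast
    then show ?thesis
      using w[OF \<open>k \<in> I\<close>] by simp
  qed
  then have "(\<Sum>k\<in>J. u k *\<^sub>R w k) \<in> \<phi> F"
    using \<open>finite I\<close> face_of_imp_convex[OF face_of_\<phi>[OF F]] u
      sum_restrict_positive_weights(1)[where u = u, OF \<open>finite I\<close> u(1)]
    by (intro convex_sum) (auto simp: J_def)
  then show ?thesis
    using sum_restrict_positive_weights(2)[where u = u and x = w, OF \<open>finite I\<close> u(1)] by (simp add: J_def)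
qed


lemma barycentric_map_face_subset:
  assumes "finite I" and v: "\<And>k. k \<in> I \<Longrightarrow> v k extreme_point_of P"
    and w: "\<And>k. k \<in> I \<Longrightarrow> \<phi> {v k} = {w k}"
    and nonneg: "\<And>p k. p \<in> P \<Longrightarrow> k \<in> I \<Longrightarrow> 0 \<le> \<sigma> p k"
    and sum1: "\<And>p. p \<in> P \<Longrightarrow> sum (\<sigma> p) I = 1"
    and bary: "\<And>p. p \<in> P \<Longrightarrow> p = (\<Sum>k\<in>I. \<sigma> p k *\<^sub>R v k)"
    and F: "F face_of P"
  shows "(\<lambda>p. \<Sum>k\<in>I. \<sigma> p k *\<^sub>R w k) ` F \<subseteq> \<phi> F"
proof clarify
  fix p
  assume "p \<in> F"
  then have "p \<in> P"
    using face_of_imp_subset[OF F] by blast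
  have in_F: "(\<Sum>k\<in>I. \<sigma> p k *\<^sub>R v k) \<in> F"
    using bary[OF \<open>p \<in> P\<close>] \<open>p \<in> F\<close> by metis
  show "(\<Sum>k\<in>I. \<sigma> p k *\<^sub>R w k) \<in> \<phi> F"
    by (rule convex_combination_of_vertices_in_face[OF F \<open>finite I\<close> v w
          nonneg[OF \<open>p \<in> P\<close>] sum1[OF \<open>p \<in> P\<close>] in_F])
qed

end

theorem lemma4p35:
  fixes P :: "'a::euclidean_space set" and Q :: "'b::euclidean_space set"
    and \<phi> :: "'a set \<Rightarrow> 'b set"
    and n :: nat and v :: "nat \<Rightarrow> 'a" and \<sigma> :: "'a \<Rightarrow> nat \<Rightarrow> real"
    and R :: "'a \<Rightarrow> 'b"
  assumes "polytope P" and "polytope Q"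
    and bij: "bij_betw \<phi> {F. F face_of P} {G. G face_of Q}"
    and mono: "\<And>F F'. F face_of P \<Longrightarrow> F' face_of P \<Longrightarrow> (F \<subseteq> F' \<longleftrightarrow> \<phi> F \<subseteq> \<phi> F')"
    and verts: "bij_betw v {1..n} {x. x extreme_point_of P}"
    and cont: "\<And>k. k \<in> {1..n} \<Longrightarrow> continuous_on P (\<lambda>p. \<sigma> p k)"
    and nonneg: "\<And>p k. p \<in> P \<Longrightarrow> k \<in> {1..n} \<Longrightarrow> \<sigma> p k \<ge> 0"
    and sum1: "\<And>p. p \<in> P \<Longrightarrow> (\<Sum>k=1..n. \<sigma> p k) = 1"
    and bary: "\<And>p. p \<in> P \<Longrightarrow> p = (\<Sum>k=1..n. \<sigma> p k *\<^sub>R v k)"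
    and R_def: "\<And>p. R p = (\<Sum>k=1..n. \<sigma> p k *\<^sub>R (THE w. \<phi> {v k} = {w}))"
  shows "(\<forall>F. F face_of P \<longrightarrow> R ` F = \<phi> F) \<and> R ` P = Q"
proof -
  interpret face_lattice_iso P Q \<phi>
    by (rule face_lattice_iso.intro[OF \<open>polytope P\<close> \<open>polytope Q\<close> bij mono])
  define w where "w k = (THE w. \<phi> {v k} = {w})" for k
  have v: "v k extreme_point_of P" if "k \<in> {1..n}" for k
    using verts that by (auto dest: bij_betwE)
  have w: "\<phi> {v k} = {w k}" if k: "k \<in> {1..n}" for k
  proof -
    obtain w' where "\<phi> {v k} = {w'}"
      using \<phi>_vertex[OF v[OF k]] by metis
    then show ?thesis
      by (simp add: w_def)
  qed
  have R_w: "R = (\<lambda>p. \<Sum>k=1..n. \<sigma> p k *\<^sub>R w k)"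
    by (intro ext) (simp add: R_def w_def)
  have contR: "continuous_on P R"
    unfolding R_w using cont by (intro continuous_intros) auto
  have R_face: "R ` F \<subseteq> \<phi> F" if "F face_of P" for F
    unfolding R_w by (rule barycentric_map_face_subset[OF _ v w nonneg sum1 bary that]) simp
  have "R ` F = \<phi> F" if "F face_of P" for F
    by (rule image_face_eq[OF contR R_face that])
  then show ?thesis
    using face_of_refl[OF polytope_imp_convex[OF \<open>polytope P\<close>]] \<phi>_top by auto
qed

end
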